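(* Let $\mathcal S$ be a Sawtooth model with $n$ upper particles, let $1\le r\le n+1$, and let $\mathcal X$ be an event of positive probability in the $\sigma$-algebra generated by all the particles other than $X_r$. Then the conditional density $x\mapsto d_{X_r\mid\mathcal X}(x)$ is (a version of) a nonincreasing function on $[0,1]$. Similarly, for $1\le r\le n$ and $\mathcal X$ an event of positive probability generated by the particles other than $Y_r$, $y\mapsto d_{Y_r\mid\mathcal X}(y)$ is nondecreasing.
   Context: A (type $--$) Sawtooth model with $n\ge1$ upper particles is specified by functions $f_1,g_1,\dots,f_n,g_n:[0,1]\to[0,\infty)$, each nondecreasing, $C^1$ and not identically zero. It is the probability space $[0,1]^{n+1}\times[0,1]^n$ with probability density at $(x_1,\dots,x_{n+1},y_1,\dots,y_n)$ equal to $\frac{1}{\mathcal V}\prod_{i=1}^n\mathbf 1_{\{x_i\le y_i\}}\mathbf 1_{\{x_{i+1}\le y_i\}}f_i(y_i-x_i)\,g_i(y_i-x_{i+1})$, $\mathcal V$ being the normalizing constant. The coordinates $X_1,\dots,X_{n+1}$ are the lower particles and $Y_1,\dots,Y_n$ the upper particles (ordered $X_1,Y_1,X_2,\dots,Y_n,X_{n+1}$); $X_I:=X_1$, $X_F:=X_{n+1}$. Conditional densities $d_{U\mid\cdot}$ and conditional cumulative distribution functions $F_{U\mid V=v}(t)=\mathbb P(U\le t\mid V=v)$ are those computed from the joint density. *)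

theory Defs
  imports "HOL-Probability.Probability"
begin

datatype particle = Xp nat | Yp nat

definition particles :: "nat \<Rightarrow> particle set" where
  "particles n = Xp ` {1..n+1} \<union> Yp ` {1..n}"

definition config_space :: "nat \<Rightarrow> (particle \<Rightarrow> real) measure" where
  "config_space n = PiM (particles n) (\<lambda>_. lborel)"

definition sawtooth_weight ::
  "nat \<Rightarrow> (nat \<Rightarrow> real \<Rightarrow> real) \<Rightarrow> (nat \<Rightarrow> real \<Rightarrow> real) \<Rightarrow> (particle \<Rightarrow> real) \<Rightarrow> real" where
  "sawtooth_weight n f g \<omega> =
     (\<Prod>k\<in>particles n. indicator {0..1} (\<omega> k)) *
     (\<Prod>i\<in>{1..n}. indicator {p. fst p \<le> snd p} (\<omega> (Xp i), \<omega> (Yp i))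
                 * indicator {p. fst p \<le> snd p} (\<omega> (Xp (i+1)), \<omega> (Yp i))
                 * f i (\<omega> (Yp i) - \<omega> (Xp i)) * g i (\<omega> (Yp i) - \<omega> (Xp (i+1))))"

definition sawtooth_V ::
  "nat \<Rightarrow> (nat \<Rightarrow> real \<Rightarrow> real) \<Rightarrow> (nat \<Rightarrow> real \<Rightarrow> real) \<Rightarrow> ennreal" where
  "sawtooth_V n f g = (\<integral>\<^sup>+ \<omega>. ennreal (sawtooth_weight n f g \<omega>) \<partial>config_space n)"

definition sawtooth_measure ::
  "nat \<Rightarrow> (nat \<Rightarrow> real \<Rightarrow> real) \<Rightarrow> (nat \<Rightarrow> real \<Rightarrow> real) \<Rightarrow> (particle \<Rightarrow> real) measure" where
  "sawtooth_measure n f g =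
     density (config_space n) (\<lambda>\<omega>. ennreal (sawtooth_weight n f g \<omega>) / sawtooth_V n f g)"

definition admissible_fun :: "(real \<Rightarrow> real) \<Rightarrow> bool" where
  "admissible_fun h \<longleftrightarrow>
     (\<forall>t\<in>{0..1}. 0 \<le> h t) \<and> mono_on {0..1} h \<and>
     (\<exists>h'. continuous_on {0..1} h' \<and>
           (\<forall>t\<in>{0..1}. (h has_real_derivative h' t) (at t within {0..1}))) \<and>
     (\<exists>t\<in>{0..1}. h t \<noteq> 0)"

definition sawtooth_params ::
  "nat \<Rightarrow> (nat \<Rightarrow> real \<Rightarrow> real) \<Rightarrow> (nat \<Rightarrow> real \<Rightarrow> real) \<Rightarrow> bool" where
  "sawtooth_params n f g \<longleftrightarrow> (\<forall>i\<in>{1..n}. admissible_fun (f i) \<and> admissible_fun (g i))"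

definition other_events :: "nat \<Rightarrow> particle \<Rightarrow> (particle \<Rightarrow> real) set set" where
  "other_events n k =
     {{\<omega> \<in> space (config_space n). restrict \<omega> (particles n - {k}) \<in> A} | A.
        A \<in> sets (PiM (particles n - {k}) (\<lambda>_. lborel))}"

end

theory Submission
  imports Defs
begin

text \<open>Conditioning on an event \<open>E\<close> generated by the coordinates other than \<open>k\<close>, Fubini
  writes the law of coordinate \<open>k\<close> as \<open>y \<mapsto> \<integral>\<^sub>A w(u(k := y)) du / P(E)\<close>: the joint density
  integrated over the slice in which coordinate \<open>k\<close> is frozen at \<open>y\<close>. The Sawtooth weight is a
  product of edge factors \<open>1{X \<le> Y} h(Y - X)\<close> with \<open>h\<close> nonnegative and nondecreasing on \<open>[0,1]\<close>,
  each of which decreases in its lower and increases in its upper particle. Hence the integrand,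
  and with it the conditional density, is nonincreasing in a lower and nondecreasing in an upper
  particle. The weight is bounded and supported on the unit cube, so the density is finite.\<close>

definition off_component_event :: "'i set \<Rightarrow> 'i \<Rightarrow> ('i \<Rightarrow> real) set \<Rightarrow> ('i \<Rightarrow> real) set" where
  "off_component_event I k A = {\<omega> \<in> space (PiM I (\<lambda>_. lborel)). restrict \<omega> (I - {k}) \<in> A}"

definition marginal_density ::
  "'i set \<Rightarrow> 'i \<Rightarrow> (('i \<Rightarrow> real) \<Rightarrow> ennreal) \<Rightarrow> ('i \<Rightarrow> real) set \<Rightarrow> real \<Rightarrow> ennreal" where
  "marginal_density I k w A y = (\<integral>\<^sup>+u. w (u(k := y)) * indicator A u \<partial>PiM (I - {k}) (\<lambda>_. lborel))"

lemma sets_off_component_event: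
  assumes "A \<in> sets (PiM (I - {k}) (\<lambda>_. lborel))"
  shows "off_component_event I k A \<in> sets (PiM I (\<lambda>_. lborel))"
proof -
  have "off_component_event I k A = (\<lambda>\<omega>. restrict \<omega> (I - {k})) -` A \<inter> space (PiM I (\<lambda>_. lborel))"
    unfolding off_component_event_def by auto
  also have "\<dots> \<in> sets (PiM I (\<lambda>_. lborel))"
    by (rule measurable_sets[OF measurable_restrict_subset assms]) auto
  finally show ?thesis .
qed

lemma measurable_fun_upd_component:
  assumes "finite I" "k \<in> I"
  shows "(\<lambda>p. (snd p)(k := fst p)) \<in> measurable (lborel \<Otimes>\<^sub>M PiM (I - {k}) (\<lambda>_. lborel)) (PiM I (\<lambda>_. lborel))"
  using assms by (intro measurable_fun_upd[where J="I - {k}"]) auto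

lemma borel_measurable_marginal_density:
  fixes I :: "'i set"
  assumes I: "finite I" "k \<in> I" and [measurable]: "w \<in> borel_measurable (PiM I (\<lambda>_. lborel))"
    and [measurable]: "A \<in> sets (PiM (I - {k}) (\<lambda>_. lborel))"
  shows "marginal_density I k w A \<in> borel_measurable lborel"
proof -
  interpret product_sigma_finite "\<lambda>_::'i. lborel :: real measure" by standard
  interpret sigma_finite_measure "PiM (I - {k}) (\<lambda>_::'i. lborel :: real measure)"
    using I by (intro sigma_finite) auto
  have [measurable]: "(\<lambda>p. w ((snd p)(k := fst p))) \<in> borel_measurable (lborel \<Otimes>\<^sub>M PiM (I - {k}) (\<lambda>_. lborel))"
    by (rule measurable_compose[OF measurable_fun_upd_component[OF I]]) measurable
  have "(\<lambda>(y, u). w (u(k := y)) * indicator A u) \<in> borel_measurable (lborel \<Otimes>\<^sub>M PiM (I - {k}) (\<lambda>_. lborel))"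
    unfolding case_prod_beta by measurable
  then show ?thesis
    unfolding marginal_density_def[abs_def] by (rule borel_measurable_nn_integral)
qed

lemma emeasure_density_off_component_event_Int:
  fixes I :: "'i set"
  assumes I: "finite I" "k \<in> I" and w[measurable]: "w \<in> borel_measurable (PiM I (\<lambda>_. lborel))"
    and A[measurable]: "A \<in> sets (PiM (I - {k}) (\<lambda>_. lborel))" and B: "B \<in> sets borel"
  shows "emeasure (density (PiM I (\<lambda>_. lborel)) w)
           (off_component_event I k A \<inter> {\<omega> \<in> space (PiM I (\<lambda>_. lborel)). \<omega> k \<in> B})
       = (\<integral>\<^sup>+y. marginal_density I k w A y * indicator B y \<partial>lborel)"
proof -
  interpret product_sigma_finite "\<lambda>_::'i. lborel :: real measure" by standard
  define J where "J = I - {k}"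
  have IJ: "insert k J = I" "finite J" "k \<notin> J" unfolding J_def using I by auto
  define S where "S = off_component_event I k A \<inter> {\<omega> \<in> space (PiM I (\<lambda>_. lborel)). \<omega> k \<in> B}"
  have [measurable]: "S \<in> sets (PiM I (\<lambda>_. lborel))"
    unfolding S_def using sets_off_component_event[OF A] B I(2) by measurable
  have S_upd: "indicator S (u(k := y)) = (indicator A u * indicator B y :: ennreal)"
    if "u \<in> space (PiM J (\<lambda>_. lborel))" for u y
  proof -
    have "u(k := y) \<in> space (PiM I (\<lambda>_. lborel))" "restrict (u(k := y)) J = u"
      using that IJ by (auto simp: space_PiM PiE_def extensional_def fun_eq_iff)
    then show ?thesis by (simp add: S_def off_component_event_def J_def indicator_def)
  qed
  have "emeasure (density (PiM I (\<lambda>_. lborel)) w) S = (\<integral>\<^sup>+\<omega>. w \<omega> * indicator S \<omega> \<partial>PiM I (\<lambda>_. lborel))"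
    by (rule emeasure_density) measurable
  also have "\<dots> = (\<integral>\<^sup>+y. (\<integral>\<^sup>+u. w (u(k := y)) * indicator S (u(k := y)) \<partial>PiM J (\<lambda>_. lborel)) \<partial>lborel)"
    unfolding IJ(1)[symmetric] by (rule product_nn_integral_insert_rev[OF IJ(2,3)]) (simp add: IJ(1))
  also have "\<dots> = (\<integral>\<^sup>+y. marginal_density I k w A y * indicator B y \<partial>lborel)"
  proof (rule nn_integral_cong)
    fix y
    have [measurable]: "(\<lambda>u. w (u(k := y))) \<in> borel_measurable (PiM J (\<lambda>_. lborel))"
      by (rule measurable_compose[OF _ w], rule measurable_fun_upd[where J=J]) (auto simp: IJ(1)[symmetric])
    have "(\<integral>\<^sup>+u. w (u(k := y)) * indicator S (u(k := y)) \<partial>PiM J (\<lambda>_. lborel))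
        = (\<integral>\<^sup>+u. w (u(k := y)) * indicator A u * indicator B y \<partial>PiM J (\<lambda>_. lborel))"
      by (rule nn_integral_cong) (simp add: S_upd mult.assoc)
    also have "\<dots> = marginal_density I k w A y * indicator B y"
      unfolding marginal_density_def J_def[symmetric] by (rule nn_integral_multc) (use A in \<open>measurable, simp add: J_def\<close>)
    finally show "(\<integral>\<^sup>+u. w (u(k := y)) * indicator S (u(k := y)) \<partial>PiM J (\<lambda>_. lborel))
        = marginal_density I k w A y * indicator B y" .
  qed
  finally show ?thesis unfolding S_def .
qed

lemma distr_component_uniform_measure_density:
  fixes I :: "'i set"
  assumes I: "finite I" "k \<in> I" and w[measurable]: "w \<in> borel_measurable (PiM I (\<lambda>_. lborel))"
    and A[measurable]: "A \<in> sets (PiM (I - {k}) (\<lambda>_. lborel))"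
  defines "M \<equiv> density (PiM I (\<lambda>_. lborel)) w" and "E \<equiv> off_component_event I k A"
  shows "distr (uniform_measure M E) lborel (\<lambda>\<omega>. \<omega> k)
       = density lborel (\<lambda>y. marginal_density I k w A y / emeasure M E)"
proof (rule measure_eqI)
  fix B assume "B \<in> sets (distr (uniform_measure M E) lborel (\<lambda>\<omega>. \<omega> k))"
  then have B[measurable]: "B \<in> sets borel" by simp
  have E[measurable]: "E \<in> sets M" unfolding M_def E_def using sets_off_component_event[OF A] by simp
  have [measurable]: "marginal_density I k w A \<in> borel_measurable borel"
    using borel_measurable_marginal_density[OF I w A] by simp
  have component[measurable]: "(\<lambda>\<omega>. \<omega> k) \<in> measurable (uniform_measure M E) lborel"
    unfolding M_def using I(2) by (simp add: measurable_cong_sets[OF sets_uniform_measure refl])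
  have "emeasure (distr (uniform_measure M E) lborel (\<lambda>\<omega>. \<omega> k)) B
      = emeasure M (E \<inter> {\<omega> \<in> space (PiM I (\<lambda>_. lborel)). \<omega> k \<in> B}) / emeasure M E"
  proof -
    have "{\<omega> \<in> space (PiM I (\<lambda>_. lborel)). \<omega> k \<in> B} \<in> sets M"
      unfolding M_def using I(2) by measurable
    moreover have "(\<lambda>\<omega>. \<omega> k) -` B \<inter> space (uniform_measure M E) = {\<omega> \<in> space (PiM I (\<lambda>_. lborel)). \<omega> k \<in> B}"
      by (auto simp: M_def)
    ultimately show ?thesis
      by (simp add: emeasure_distr[OF component] emeasure_uniform_measure[OF E])
  qed
  also have "\<dots> = (\<integral>\<^sup>+y. marginal_density I k w A y * indicator B y \<partial>lborel) * inverse (emeasure M E)"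
    unfolding M_def E_def divide_ennreal_def
    by (subst emeasure_density_off_component_event_Int[OF I w A B]) simp
  also have "\<dots> = (\<integral>\<^sup>+y. marginal_density I k w A y / emeasure M E * indicator B y \<partial>lborel)"
    by (subst nn_integral_multc[symmetric]) (measurable, simp add: divide_ennreal_def ac_simps)
  also have "\<dots> = emeasure (density lborel (\<lambda>y. marginal_density I k w A y / emeasure M E)) B"
    unfolding divide_ennreal_def by (subst emeasure_density) (auto intro!: borel_measurable_times)
  finally show "emeasure (distr (uniform_measure M E) lborel (\<lambda>\<omega>. \<omega> k)) B
      = emeasure (density lborel (\<lambda>y. marginal_density I k w A y / emeasure M E)) B" .
qed simp

lemma marginal_density_le:
  fixes I :: "'i set" and S :: "real set" and w :: "('i \<Rightarrow> real) \<Rightarrow> ennreal"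
  assumes I: "finite I" "k \<in> I" and S: "S \<in> sets borel"
    and bound: "\<And>\<omega>. w \<omega> \<le> c" and support: "\<And>\<omega>. \<omega> \<notin> Pi I (\<lambda>_. S) \<Longrightarrow> w \<omega> = 0"
  shows "marginal_density I k w A y \<le> c * emeasure lborel S ^ card (I - {k})"
proof -
  interpret product_sigma_finite "\<lambda>_::'i. lborel :: real measure" by standard
  have "marginal_density I k w A y
      \<le> (\<integral>\<^sup>+u. c * indicator (PiE (I - {k}) (\<lambda>_. S)) u \<partial>PiM (I - {k}) (\<lambda>_. lborel))"
    unfolding marginal_density_def
  proof (rule nn_integral_mono)
    fix u :: "'i \<Rightarrow> real" assume u: "u \<in> space (PiM (I - {k}) (\<lambda>_. lborel))"
    show "w (u(k := y)) * indicator A u \<le> c * indicator (PiE (I - {k}) (\<lambda>_. S)) u"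
    proof (cases "u \<in> PiE (I - {k}) (\<lambda>_. S)")
      case True
      then show ?thesis using bound[of "u(k := y)"] by (auto simp: indicator_def)
    next
      case False
      then have "u(k := y) \<notin> Pi I (\<lambda>_. S)"
        using u by (auto simp: space_PiM PiE_def Pi_def)
      then show ?thesis by (simp add: support)
    qed
  qed
  also have "\<dots> = c * emeasure lborel S ^ card (I - {k})"
    using I S by (simp add: nn_integral_cmult_indicator sets_PiM_I_finite emeasure_PiM)
  finally show ?thesis .
qed

lemma conditional_component_density:
  fixes I :: "'i set" and S :: "real set"
  assumes I: "finite I" "k \<in> I" and w[measurable]: "w \<in> borel_measurable (PiM I (\<lambda>_. lborel))"
    and A[measurable]: "A \<in> sets (PiM (I - {k}) (\<lambda>_. lborel))"
    and bound: "\<And>\<omega>. w \<omega> \<le> c" "c \<noteq> \<infinity>"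
    and support: "\<And>\<omega>. \<omega> \<notin> Pi I (\<lambda>_. S) \<Longrightarrow> w \<omega> = 0" "S \<in> sets borel" "emeasure lborel S \<noteq> \<infinity>"
  defines "M \<equiv> density (PiM I (\<lambda>_. lborel)) w" and "E \<equiv> off_component_event I k A"
  assumes E: "emeasure M E \<noteq> 0"
  shows "\<exists>h. distributed (uniform_measure M E) lborel (\<lambda>\<omega>. \<omega> k) (\<lambda>y. ennreal (h y)) \<and>
             (\<forall>y. 0 \<le> h y) \<and> (\<forall>x y. (\<forall>u. w (u(k := y)) \<le> w (u(k := x))) \<longrightarrow> h y \<le> h x)"
proof -
  define D where "D = marginal_density I k w A"
  have "D y \<noteq> \<infinity>" for y
    using marginal_density_le[where w=w and c=c and A=A and y=y, OF I support(2) bound(1) support(1)]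
      bound(2) support(3)
    by (auto simp: D_def top_unique ennreal_mult_eq_top_iff power_eq_top_ennreal)
  then have finite: "D y / emeasure M E \<noteq> \<infinity>" for y
    using E by (simp add: ennreal_divide_eq_top_iff)
  have [measurable]: "D \<in> borel_measurable borel"
    using borel_measurable_marginal_density[OF I w A] by (simp add: D_def)
  have "(\<lambda>\<omega>. \<omega> k) \<in> measurable (uniform_measure M E) lborel"
    unfolding M_def using I(2) by (simp add: measurable_cong_sets[OF sets_uniform_measure refl])
  moreover have "distr (uniform_measure M E) lborel (\<lambda>\<omega>. \<omega> k) = density lborel (\<lambda>y. D y / emeasure M E)"
    unfolding M_def E_def D_def by (rule distr_component_uniform_measure_density[OF I w A])
  moreover have "(\<lambda>y. ennreal (enn2real (D y / emeasure M E))) = (\<lambda>y. D y / emeasure M E)"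
    using finite by (simp add: ennreal_enn2real_if)
  moreover have "enn2real (D y / emeasure M E) \<le> enn2real (D x / emeasure M E)"
    if "\<forall>u. w (u(k := y)) \<le> w (u(k := x))" for x y
  proof -
    have "D y \<le> D x"
      unfolding D_def marginal_density_def using that by (intro nn_integral_mono mult_right_mono) auto
    then show ?thesis
      using finite[of x] by (intro enn2real_mono divide_right_mono_ennreal) (auto simp: top.not_eq_extremum)
  qed
  ultimately show ?thesis
    by (intro exI[of _ "\<lambda>y. enn2real (D y / emeasure M E)"]) (simp add: distributed_def)
qed

definition edge_weight :: "(real \<Rightarrow> real) \<Rightarrow> real \<Rightarrow> real \<Rightarrow> real" where
  "edge_weight h a b = indicator {p. fst p \<le> snd p} (a, b) * h (b - a)"

lemma edge_weight_unit_interval: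
  "a \<in> {0..1} \<Longrightarrow> b \<in> {0..1} \<Longrightarrow> edge_weight h a b = indicator {0..1} (b - a) * h (b - a)"
  by (auto simp: edge_weight_def indicator_def)

context
  fixes h :: "real \<Rightarrow> real"
  assumes nonneg: "\<forall>t\<in>{0..1}. 0 \<le> h t" and mono: "mono_on {0..1} h"
begin

lemma edge_weight_nonneg: "a \<in> {0..1} \<Longrightarrow> b \<in> {0..1} \<Longrightarrow> 0 \<le> edge_weight h a b"
  using nonneg by (auto simp: edge_weight_def indicator_def)

lemma edge_weight_le: "a \<in> {0..1} \<Longrightarrow> b \<in> {0..1} \<Longrightarrow> edge_weight h a b \<le> h 1"
  using nonneg by (auto simp: edge_weight_def indicator_def intro: mono_onD[OF mono])

lemma edge_weight_mono:
  assumes "a1 \<in> {0..1}" "b1 \<in> {0..1}" "a2 \<in> {0..1}" "b2 \<in> {0..1}" "a2 \<le> a1" "b1 \<le> b2"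
  shows "edge_weight h a1 b1 \<le> edge_weight h a2 b2"
proof (cases "a1 \<le> b1")
  case True
  then have "h (b1 - a1) \<le> h (b2 - a2)" using assms by (intro mono_onD[OF mono]) auto
  then show ?thesis using True assms by (simp add: edge_weight_def indicator_def)
next
  case False
  then show ?thesis using edge_weight_nonneg[of a2 b2] assms by (simp add: edge_weight_def)
qed

end

lemma admissible_fun_nonneg: "admissible_fun h \<Longrightarrow> \<forall>t\<in>{0..1}. 0 \<le> h t"
  and admissible_fun_mono: "admissible_fun h \<Longrightarrow> mono_on {0..1} h"
  by (simp_all add: admissible_fun_def)

lemma admissible_fun_continuous_on: "admissible_fun h \<Longrightarrow> continuous_on {0..1} h"
  unfolding admissible_fun_def continuous_on_eq_continuous_within by (auto intro: DERIV_continuous)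

lemma sawtooth_weight_edge_weight:
  "sawtooth_weight n f g \<omega> = (\<Prod>j\<in>particles n. indicator {0..1} (\<omega> j)) *
     (\<Prod>i\<in>{1..n}. edge_weight (f i) (\<omega> (Xp i)) (\<omega> (Yp i)) * edge_weight (g i) (\<omega> (Xp (i+1))) (\<omega> (Yp i)))"
  unfolding sawtooth_weight_def edge_weight_def by (simp add: ac_simps)

lemma finite_particles [simp]: "finite (particles n)"
  unfolding particles_def by auto

lemma in_particlesI [simp]:
  "i \<in> {1..n} \<Longrightarrow> Xp i \<in> particles n" "i \<in> {1..n} \<Longrightarrow> Xp (Suc i) \<in> particles n"
  "i \<in> {1..n} \<Longrightarrow> Yp i \<in> particles n"
  unfolding particles_def by auto

lemma sawtooth_weight_eq_0:
  assumes "\<omega> \<notin> Pi (particles n) (\<lambda>_. {0..1})"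
  shows "sawtooth_weight n f g \<omega> = 0"
proof -
  obtain j where "j \<in> particles n" "\<omega> j \<notin> {0..1}" using assms by (auto simp: Pi_def)
  then have "(\<Prod>j\<in>particles n. indicator {0..1} (\<omega> j) :: real) = 0"
    by (intro prod_zero bexI[of _ j]) auto
  then show ?thesis unfolding sawtooth_weight_edge_weight by simp
qed

lemma sawtooth_weight_cube:
  "\<omega> \<in> Pi (particles n) (\<lambda>_. {0..1}) \<Longrightarrow> sawtooth_weight n f g \<omega> =
     (\<Prod>i\<in>{1..n}. edge_weight (f i) (\<omega> (Xp i)) (\<omega> (Yp i)) * edge_weight (g i) (\<omega> (Xp (i+1))) (\<omega> (Yp i)))"
  unfolding sawtooth_weight_edge_weight by (simp add: Pi_def)

lemma sawtooth_params_admissible: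
  "sawtooth_params n f g \<Longrightarrow> i \<in> {1..n} \<Longrightarrow> admissible_fun (f i) \<and> admissible_fun (g i)"
  by (simp add: sawtooth_params_def)

lemma sawtooth_weight_nonneg:
  assumes "sawtooth_params n f g"
  shows "0 \<le> sawtooth_weight n f g \<omega>"
proof (cases "\<omega> \<in> Pi (particles n) (\<lambda>_. {0..1})")
  case True
  then show ?thesis
    using sawtooth_params_admissible[OF assms]
    by (auto simp: sawtooth_weight_cube admissible_fun_nonneg admissible_fun_mono
        intro!: prod_nonneg mult_nonneg_nonneg edge_weight_nonneg)
qed (simp add: sawtooth_weight_eq_0)

lemma sawtooth_weight_le:
  assumes "sawtooth_params n f g"
  shows "sawtooth_weight n f g \<omega> \<le> (\<Prod>i\<in>{1..n}. f i 1 * g i 1)"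
proof (cases "\<omega> \<in> Pi (particles n) (\<lambda>_. {0..1})")
  case True
  then show ?thesis
    using sawtooth_params_admissible[OF assms]
    by (auto simp: sawtooth_weight_cube admissible_fun_nonneg admissible_fun_mono
        intro!: prod_mono mult_mono mult_nonneg_nonneg edge_weight_nonneg edge_weight_le)
next
  case False
  then show ?thesis
    using sawtooth_params_admissible[OF assms]
    by (auto simp: sawtooth_weight_eq_0 admissible_fun_nonneg intro!: prod_nonneg)
qed

lemma sawtooth_weight_mono:
  assumes "sawtooth_params n f g"
    and cube: "\<omega>1 \<in> Pi (particles n) (\<lambda>_. {0..1})" "\<omega>2 \<in> Pi (particles n) (\<lambda>_. {0..1})"
    and "\<And>i. \<omega>2 (Xp i) \<le> \<omega>1 (Xp i)" "\<And>i. \<omega>1 (Yp i) \<le> \<omega>2 (Yp i)"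
  shows "sawtooth_weight n f g \<omega>1 \<le> sawtooth_weight n f g \<omega>2"
  using sawtooth_params_admissible[OF assms(1)] assms(2-)
  by (auto simp: sawtooth_weight_cube admissible_fun_nonneg admissible_fun_mono Pi_def
      intro!: prod_mono mult_mono mult_nonneg_nonneg edge_weight_nonneg edge_weight_mono)

text \<open>The parameter functions are only known to be continuous on \<open>[0,1]\<close>; cutting each edge
  factor off outside \<open>[0,1]\<close> makes the weight visibly Borel.\<close>

lemma sawtooth_weight_unit_indicator:
  "sawtooth_weight n f g \<omega> = (\<Prod>j\<in>particles n. indicator {0..1} (\<omega> j)) *
     (\<Prod>i\<in>{1..n}. (indicator {0..1} (\<omega> (Yp i) - \<omega> (Xp i)) * f i (\<omega> (Yp i) - \<omega> (Xp i))) *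
        (indicator {0..1} (\<omega> (Yp i) - \<omega> (Xp (i+1))) * g i (\<omega> (Yp i) - \<omega> (Xp (i+1)))))"
proof (cases "\<omega> \<in> Pi (particles n) (\<lambda>_. {0..1})")
  case True
  then have "(\<Prod>j\<in>particles n. indicator {0..1} (\<omega> j) :: real) = 1"
    by (intro prod.neutral) (auto simp: Pi_def)
  moreover have "(\<Prod>i\<in>{1..n}. edge_weight (f i) (\<omega> (Xp i)) (\<omega> (Yp i)) * edge_weight (g i) (\<omega> (Xp (i+1))) (\<omega> (Yp i)))
      = (\<Prod>i\<in>{1..n}. (indicator {0..1} (\<omega> (Yp i) - \<omega> (Xp i)) * f i (\<omega> (Yp i) - \<omega> (Xp i))) *
          (indicator {0..1} (\<omega> (Yp i) - \<omega> (Xp (i+1))) * g i (\<omega> (Yp i) - \<omega> (Xp (i+1)))))"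
    using True by (intro prod.cong refl) (simp add: edge_weight_unit_interval Pi_def)
  ultimately show ?thesis
    by (simp add: sawtooth_weight_cube[OF True])
next
  case False
  then obtain j where "j \<in> particles n" "\<omega> j \<notin> {0..1}" by (auto simp: Pi_def)
  then have "(\<Prod>j\<in>particles n. indicator {0..1} (\<omega> j) :: real) = 0"
    by (intro prod_zero bexI[of _ j]) auto
  with False show ?thesis by (simp add: sawtooth_weight_eq_0)
qed

lemma borel_measurable_sawtooth_weight:
  assumes "sawtooth_params n f g"
  shows "sawtooth_weight n f g \<in> borel_measurable (config_space n)"
proof -
  have truncated: "(\<lambda>t. indicator {0..1} t * h t) \<in> borel_measurable borel" if "admissible_fun h" for h
    using borel_measurable_continuous_on_indicator[OF _ admissible_fun_continuous_on[OF that]] by simp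
  show ?thesis
    unfolding sawtooth_weight_unit_indicator[abs_def] config_space_def
    using sawtooth_params_admissible[OF assms]
    by (intro borel_measurable_times borel_measurable_prod measurable_compose[OF _ truncated]) auto
qed

lemma sawtooth_weight_fun_upd_Xp_antimono:
  assumes "sawtooth_params n f g" "0 \<le> x" "x \<le> y" "y \<le> 1"
  shows "sawtooth_weight n f g (u(Xp r := y)) \<le> sawtooth_weight n f g (u(Xp r := x))"
proof (cases "u(Xp r := y) \<in> Pi (particles n) (\<lambda>_. {0..1})")
  case True
  moreover have "u(Xp r := x) \<in> Pi (particles n) (\<lambda>_. {0..1})"
    using True assms by (auto simp: Pi_def)
  ultimately show ?thesis
    using assms by (intro sawtooth_weight_mono) auto
qed (simp add: sawtooth_weight_eq_0 sawtooth_weight_nonneg[OF assms(1)])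

lemma sawtooth_weight_fun_upd_Yp_mono:
  assumes "sawtooth_params n f g" "0 \<le> x" "x \<le> y" "y \<le> 1"
  shows "sawtooth_weight n f g (u(Yp r := x)) \<le> sawtooth_weight n f g (u(Yp r := y))"
proof (cases "u(Yp r := x) \<in> Pi (particles n) (\<lambda>_. {0..1})")
  case True
  moreover have "u(Yp r := y) \<in> Pi (particles n) (\<lambda>_. {0..1})"
    using True assms by (auto simp: Pi_def)
  ultimately show ?thesis
    using assms by (intro sawtooth_weight_mono) auto
qed (simp add: sawtooth_weight_eq_0 sawtooth_weight_nonneg[OF assms(1)])

lemma sawtooth_measure_null_if_V_eq_0:
  assumes "sawtooth_params n f g" "sawtooth_V n f g = 0"
  shows "sawtooth_measure n f g = null_measure (config_space n)"
proof -
  note borel_measurable_sawtooth_weight[OF assms(1), measurable]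
  have "AE \<omega> in config_space n. ennreal (sawtooth_weight n f g \<omega>) = 0"
    using assms(2) unfolding sawtooth_V_def by (subst (asm) nn_integral_0_iff_AE) auto
  then have "sawtooth_measure n f g = density (config_space n) (\<lambda>_. 0)"
    unfolding sawtooth_measure_def by (intro density_cong) (auto elim: AE_mp)
  then show ?thesis by (simp add: null_measure_eq_density)
qed

lemma other_events_eq: "other_events n k = off_component_event (particles n) k ` sets (PiM (particles n - {k}) (\<lambda>_. lborel))"
  unfolding other_events_def off_component_event_def config_space_def by auto

lemma sawtooth_conditional_density:
  assumes params: "sawtooth_params n f g" and k: "k \<in> particles n"
    and E: "E \<in> other_events n k" and pos: "measure (sawtooth_measure n f g) E > 0"
  shows "\<exists>h. distributed (uniform_measure (sawtooth_measure n f g) E) lborel (\<lambda>\<omega>. \<omega> k) (\<lambda>y. ennreal (h y)) \<and>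
             (\<forall>y. 0 \<le> h y) \<and>
             (\<forall>x y. (\<forall>u. sawtooth_weight n f g (u(k := y)) \<le> sawtooth_weight n f g (u(k := x))) \<longrightarrow> h y \<le> h x)"
proof -
  obtain A where A: "A \<in> sets (PiM (particles n - {k}) (\<lambda>_. lborel))" and E_eq: "E = off_component_event (particles n) k A"
    using E unfolding other_events_eq by auto
  have E_pos: "emeasure (sawtooth_measure n f g) E \<noteq> 0"
    using pos by (auto simp: measure_def)
  then have V: "sawtooth_V n f g \<noteq> 0"
    using sawtooth_measure_null_if_V_eq_0[OF params] by auto
  define w where "w \<omega> = ennreal (sawtooth_weight n f g \<omega>) / sawtooth_V n f g" for \<omega>
  have w_measurable: "w \<in> borel_measurable (PiM (particles n) (\<lambda>_. lborel))"
    using borel_measurable_sawtooth_weight[OF params] unfolding w_def[abs_def] config_space_def by measurable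
  have bound: "w \<omega> \<le> ennreal (\<Prod>i\<in>{1..n}. f i 1 * g i 1) / sawtooth_V n f g" for \<omega>
    unfolding w_def by (intro divide_right_mono_ennreal ennreal_leI sawtooth_weight_le[OF params])
  have support: "w \<omega> = 0" if "\<omega> \<notin> Pi (particles n) (\<lambda>_. {0..1})" for \<omega>
    using that by (simp add: w_def sawtooth_weight_eq_0)
  have M_eq: "sawtooth_measure n f g = density (PiM (particles n) (\<lambda>_. lborel)) w"
    unfolding sawtooth_measure_def w_def config_space_def ..
  obtain h where
    "distributed (uniform_measure (sawtooth_measure n f g) E) lborel (\<lambda>\<omega>. \<omega> k) (\<lambda>y. ennreal (h y))"
    "\<forall>y. 0 \<le> h y" "\<forall>x y. (\<forall>u. w (u(k := y)) \<le> w (u(k := x))) \<longrightarrow> h y \<le> h x"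
    using conditional_component_density[where S="{0..1}", OF finite_particles k w_measurable A bound _ support] V E_pos
    unfolding M_eq E_eq by (auto simp: ennreal_divide_eq_top_iff)
  moreover have "w (u(k := y)) \<le> w (u(k := x))"
    if "sawtooth_weight n f g (u(k := y)) \<le> sawtooth_weight n f g (u(k := x))" for u x y
    unfolding w_def using that by (intro divide_right_mono_ennreal ennreal_leI)
  ultimately show ?thesis by blast
qed

theorem mainTheorem4:
  fixes n :: nat and f g :: "nat \<Rightarrow> real \<Rightarrow> real"
  assumes "n \<ge> 1" and "sawtooth_params n f g"
  shows "(\<forall>r\<in>{1..n+1}. \<forall>E\<in>other_events n (Xp r).
            measure (sawtooth_measure n f g) E > 0 \<longrightarrow>
            (\<exists>h :: real \<Rightarrow> real.
               distributed (uniform_measure (sawtooth_measure n f g) E) lborel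
                 (\<lambda>\<omega>. \<omega> (Xp r)) (\<lambda>x. ennreal (h x)) \<and>
               (\<forall>x. 0 \<le> h x) \<and>
               (\<forall>x y. 0 \<le> x \<longrightarrow> x \<le> y \<longrightarrow> y \<le> 1 \<longrightarrow> h y \<le> h x)))
       \<and> (\<forall>r\<in>{1..n}. \<forall>E\<in>other_events n (Yp r).
            measure (sawtooth_measure n f g) E > 0 \<longrightarrow>
            (\<exists>h :: real \<Rightarrow> real.
               distributed (uniform_measure (sawtooth_measure n f g) E) lborel
                 (\<lambda>\<omega>. \<omega> (Yp r)) (\<lambda>x. ennreal (h x)) \<and>
               (\<forall>x. 0 \<le> h x) \<and>
               (\<forall>x y. 0 \<le> x \<longrightarrow> x \<le> y \<longrightarrow> y \<le> 1 \<longrightarrow> h x \<le> h y)))"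
proof (intro conjI ballI impI)
  fix r E assume "r \<in> {1..n+1}" "E \<in> other_events n (Xp r)" "measure (sawtooth_measure n f g) E > 0"
  moreover have "Xp r \<in> particles n" using \<open>r \<in> {1..n+1}\<close> by (auto simp: particles_def)
  ultimately show "\<exists>h. distributed (uniform_measure (sawtooth_measure n f g) E) lborel (\<lambda>\<omega>. \<omega> (Xp r)) (\<lambda>x. ennreal (h x)) \<and>
      (\<forall>x. 0 \<le> h x) \<and> (\<forall>x y. 0 \<le> x \<longrightarrow> x \<le> y \<longrightarrow> y \<le> 1 \<longrightarrow> h y \<le> h x)"
    using sawtooth_conditional_density[OF assms(2)] sawtooth_weight_fun_upd_Xp_antimono[OF assms(2)] by meson
next
  fix r E assume "r \<in> {1..n}" "E \<in> other_events n (Yp r)" "measure (sawtooth_measure n f g) E > 0"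
  moreover have "Yp r \<in> particles n" using \<open>r \<in> {1..n}\<close> by simp
  ultimately show "\<exists>h. distributed (uniform_measure (sawtooth_measure n f g) E) lborel (\<lambda>\<omega>. \<omega> (Yp r)) (\<lambda>x. ennreal (h x)) \<and>
      (\<forall>x. 0 \<le> h x) \<and> (\<forall>x y. 0 \<le> x \<longrightarrow> x \<le> y \<longrightarrow> y \<le> 1 \<longrightarrow> h x \<le> h y)"
    using sawtooth_conditional_density[OF assms(2)] sawtooth_weight_fun_upd_Yp_mono[OF assms(2)] by meson
qed

end
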